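(* For every $\delta>0$, the function $\alpha\mapsto L(\alpha;\delta)$ is strictly decreasing on $(0,1)$.
   Context: For $s\ge0$ let $\phi_1(s)=\int_0^{\pi/2}\frac{\sin^2\theta}{(\sin^2\theta+s^2)^{1/2}}d\theta$ (strictly decreasing, $\phi_1(0)=1$, $\phi_1(s)\to0$ as $s\to\infty$, with inverse $\phi_1^{-1}:(0,1]\to[0,\infty)$) and $\phi_2(s)=\int_0^{\pi/2}\frac{2\sin^2\theta+s^2}{(\sin^2\theta+s^2)^{1/2}}d\theta$. For $\alpha\in(0,1)$ and $\delta>0$ define $L(\alpha;\delta)=\frac4\delta\Big(1-\frac{\phi_2^2(\phi_1^{-1}(\alpha))}{4[1+(\phi_1^{-1}(\alpha))^2]}\Big)$. *)

theory Defs
  imports "HOL-Analysis.Analysis"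
begin

definition phi1 :: "real \<Rightarrow> real" where
  "phi1 s = integral {0..pi/2} (\<lambda>\<theta>. (sin \<theta>)\<^sup>2 / sqrt ((sin \<theta>)\<^sup>2 + s\<^sup>2))"

definition phi2 :: "real \<Rightarrow> real" where
  "phi2 s = integral {0..pi/2} (\<lambda>\<theta>. (2 * (sin \<theta>)\<^sup>2 + s\<^sup>2) / sqrt ((sin \<theta>)\<^sup>2 + s\<^sup>2))"

definition phi1_inv :: "real \<Rightarrow> real" where
  "phi1_inv a = (THE s. 0 \<le> s \<and> phi1 s = a)"

definition L :: "real \<Rightarrow> real \<Rightarrow> real" where
  "L \<alpha> \<delta> = 4 / \<delta> * (1 - (phi2 (phi1_inv \<alpha>))\<^sup>2 / (4 * (1 + (phi1_inv \<alpha>)\<^sup>2)))"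

end

theory Submission
  imports Defs
begin

text \<open>
  With \<open>r = \<surd>(1 + s\<^sup>2)\<close> and \<open>v(\<theta>) = \<surd>(sin\<^sup>2\<theta> + s\<^sup>2)\<close>, the integrand of \<open>\<phi>\<^sub>2\<close> differs from
  \<open>r + sin\<^sup>2\<theta> / (r + v(\<theta>))\<close> by the derivative of \<open>sin \<theta> cos \<theta> / (r + v(\<theta>))\<close>, which vanishes at
  both ends of \<open>[0, \<pi>/2]\<close>. Hence \<open>\<phi>\<^sub>2(s) = r (\<pi>/2 + \<kappa>(s))\<close> with
  \<open>\<kappa>(s) = \<integral> sin\<^sup>2\<theta> / (r (r + v(\<theta>))) d\<theta>\<close>, and \<open>L(\<alpha>;\<delta>) = 4/\<delta> \<cdot> (1 - (\<pi>/2 + \<kappa>(\<phi>\<^sub>1\<^sup>-\<^sup>1 \<alpha>))\<^sup>2/4)\<close>.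
  The integrands of \<open>\<phi>\<^sub>1\<close> and \<open>\<kappa>\<close> decrease strictly in \<open>s \<ge> 0\<close>, so both functions do; and
  \<open>\<phi>\<^sub>1\<close> is \<open>\<pi>/2\<close>-Lipschitz with \<open>\<phi>\<^sub>1(0) = 1\<close> and \<open>\<phi>\<^sub>1(s) \<le> \<pi>/(2s)\<close>, so \<open>\<phi>\<^sub>1\<^sup>-\<^sup>1\<close> is a strictly
  decreasing map from \<open>(0,1]\<close> to \<open>[0,\<infinity>)\<close>. Composing the monotonicities, \<open>L\<close> decreases in \<open>\<alpha>\<close>.
\<close>

lemma abs_sqrt_add_sq_diff_le:
  fixes x s t :: real
  assumes "0 \<le> x"
  shows "\<bar>sqrt (x + s\<^sup>2) - sqrt (x + t\<^sup>2)\<bar> \<le> \<bar>s - t\<bar>"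
proof -
  have "\<bar>cmod (Complex (sqrt x) s) - cmod (Complex (sqrt x) t)\<bar> \<le> cmod (Complex (sqrt x) s - Complex (sqrt x) t)"
    by (rule norm_triangle_ineq3)
  moreover have "Complex (sqrt x) s - Complex (sqrt x) t = Complex 0 (s - t)"
    by (simp add: complex_eq_iff)
  ultimately show ?thesis
    using assms by (simp add: complex_norm)
qed

lemma abs_div_sqrt_add_sq_diff_le:
  fixes x s t :: real
  assumes "0 \<le> x"
  shows "\<bar>x / sqrt (x + s\<^sup>2) - x / sqrt (x + t\<^sup>2)\<bar> \<le> \<bar>s - t\<bar>"
proof (cases "x = 0")
  case False
  define a b where "a = sqrt (x + s\<^sup>2)" and "b = sqrt (x + t\<^sup>2)"
  have "sqrt x \<le> a" "sqrt x \<le> b" "0 < sqrt x"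
    using assms False by (simp_all add: a_def b_def)
  then have "0 < a" "0 < b"
    by linarith+
  have "sqrt x * sqrt x \<le> a * b"
    using \<open>sqrt x \<le> a\<close> \<open>sqrt x \<le> b\<close> \<open>0 < a\<close> \<open>0 < sqrt x\<close>
    by (meson less_imp_le mult_mono)
  then have "x \<le> a * b"
    using assms by simp
  have "x / a - x / b = x / (a * b) * (b - a)"
    using \<open>0 < a\<close> \<open>0 < b\<close> by (simp add: field_simps)
  then have "\<bar>x / a - x / b\<bar> = x / (a * b) * \<bar>a - b\<bar>"
    using \<open>0 < a\<close> \<open>0 < b\<close> assms by (simp add: abs_mult abs_minus_commute)
  also have "\<dots> \<le> 1 * \<bar>a - b\<bar>"
    using \<open>x \<le> a * b\<close> \<open>0 < a\<close> \<open>0 < b\<close> by (intro mult_right_mono) simp_all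
  also have "\<dots> \<le> \<bar>s - t\<bar>"
    using abs_sqrt_add_sq_diff_le[OF assms] by (simp add: a_def b_def)
  finally show ?thesis by (simp add: a_def b_def)
qed simp

lemma continuous_on_phi1_integrand:
  "continuous_on A (\<lambda>\<theta>. (sin \<theta>)\<^sup>2 / sqrt ((sin \<theta>)\<^sup>2 + s\<^sup>2))"
proof (cases "s = 0")
  case True
  have "(sin \<theta>)\<^sup>2 / sqrt ((sin \<theta>)\<^sup>2) = \<bar>sin \<theta>\<bar>" for \<theta>
    by (cases "sin \<theta> = 0") (simp_all add: abs_if power2_eq_square)
  then show ?thesis
    using True by (simp add: continuous_intros)
next
  case False
  then show ?thesis
    by (intro continuous_intros) (simp add: add_nonneg_pos)
qed

lemma phi1_lipschitz: "(pi / 2)-lipschitz_on UNIV phi1"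
proof (rule lipschitz_onI)
  fix s t :: real
  have "phi1 s - phi1 t = integral {0..pi/2}
      (\<lambda>\<theta>. (sin \<theta>)\<^sup>2 / sqrt ((sin \<theta>)\<^sup>2 + s\<^sup>2) - (sin \<theta>)\<^sup>2 / sqrt ((sin \<theta>)\<^sup>2 + t\<^sup>2))"
    unfolding phi1_def
    by (intro integral_diff[symmetric] integrable_continuous_real continuous_on_phi1_integrand)
  also have "norm \<dots> \<le> integral {0..pi/2} (\<lambda>_. \<bar>s - t\<bar>)"
    by (intro integral_norm_bound_integral integrable_continuous_real continuous_intros
        continuous_on_phi1_integrand) (simp add: abs_div_sqrt_add_sq_diff_le)
  also have "\<dots> = pi / 2 * \<bar>s - t\<bar>"
    by simp
  finally show "dist (phi1 s) (phi1 t) \<le> pi / 2 * dist s t"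
    by (simp add: dist_real_def)
qed simp

lemma continuous_on_phi1: "continuous_on A phi1"
  using lipschitz_on_continuous_on[OF phi1_lipschitz] continuous_on_subset by blast

lemma phi1_zero [simp]: "phi1 0 = 1"
proof -
  have "phi1 0 = integral {0..pi/2} sin"
    unfolding phi1_def
    by (intro integral_cong) (simp add: real_sqrt_abs power2_eq_square sin_ge_zero)
  then show ?thesis
    by simp
qed

lemma phi1_le:
  assumes "0 < s"
  shows "phi1 s \<le> pi / (2 * s)"
proof -
  have "(sin \<theta>)\<^sup>2 / sqrt ((sin \<theta>)\<^sup>2 + s\<^sup>2) \<le> 1 / s" for \<theta>
  proof -
    have "s \<le> sqrt ((sin \<theta>)\<^sup>2 + s\<^sup>2)"
      using assms real_sqrt_le_mono[of "s\<^sup>2" "(sin \<theta>)\<^sup>2 + s\<^sup>2"] by simp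
    moreover have "(sin \<theta>)\<^sup>2 \<le> 1"
      by (simp add: abs_square_le_1)
    ultimately show ?thesis
      using assms by (simp add: frac_le)
  qed
  then have "phi1 s \<le> integral {0..pi/2} (\<lambda>_. 1 / s)"
    unfolding phi1_def
    by (intro integral_le integrable_continuous_real continuous_intros continuous_on_phi1_integrand)
  then show ?thesis
    by simp
qed

lemma integral_quarter_period_less:
  fixes f g :: "real \<Rightarrow> real"
  assumes "continuous_on {0..pi/2} f" "continuous_on {0..pi/2} g"
    and "\<And>\<theta>. 0 < sin \<theta> \<Longrightarrow> f \<theta> < g \<theta>"
  shows "integral {0..pi/2} f < integral {0..pi/2} g"
proof (rule integral_less_real[OF assms(1,2)])
  show "{0<..<pi/2} \<noteq> {}"
    using pi_gt_zero by (simp; linarith)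
  show "f \<theta> < g \<theta>" if "\<theta> \<in> {0<..<pi/2}" for \<theta>
    using that by (intro assms(3) sin_gt_zero) auto
qed

lemma phi1_strict_antimono: "strict_antimono_on {0..} phi1"
proof (rule monotone_onI)
  fix s t :: real
  assume "s \<in> {0..}" "s < t"
  then have "s\<^sup>2 < t\<^sup>2"
    by (simp add: power_strict_mono)
  show "phi1 t < phi1 s"
    unfolding phi1_def
  proof (intro integral_quarter_period_less continuous_on_phi1_integrand)
    fix \<theta> :: real
    assume "0 < sin \<theta>"
    with \<open>s\<^sup>2 < t\<^sup>2\<close> show "(sin \<theta>)\<^sup>2 / sqrt ((sin \<theta>)\<^sup>2 + t\<^sup>2) < (sin \<theta>)\<^sup>2 / sqrt ((sin \<theta>)\<^sup>2 + s\<^sup>2)"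
      by (intro divide_strict_left_mono) (simp_all add: add_pos_nonneg)
  qed
qed

lemma ex_phi1_eq:
  assumes "0 < a" "a \<le> 1"
  shows "\<exists>s\<ge>0. phi1 s = a"
proof -
  have "phi1 (pi / a) \<le> a / 2"
    using phi1_le[of "pi / a"] assms by simp
  then have "\<exists>s\<ge>0. s \<le> pi / a \<and> phi1 s = a"
    using assms by (intro IVT2' continuous_on_phi1) auto
  then show ?thesis
    by blast
qed

lemma phi1_inv_phi1:
  assumes "0 \<le> s"
  shows "phi1_inv (phi1 s) = s"
  unfolding phi1_inv_def
proof (rule the1_equality)
  have "inj_on phi1 {0..}"
    using phi1_strict_antimono strict_antimono_iff_antimono by blast
  then show "\<exists>!t. 0 \<le> t \<and> phi1 t = phi1 s"
    using assms by (auto dest: inj_onD)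
qed (use assms in simp)

lemma phi1_inv_strict_antimono: "strict_antimono_on {0<..1} phi1_inv"
proof (rule monotone_onI)
  fix a b :: real
  assume "a \<in> {0<..1}" "b \<in> {0<..1}" "a < b"
  then obtain s t where "0 \<le> s" "phi1 s = a" "0 \<le> t" "phi1 t = b"
    using ex_phi1_eq by (metis greaterThanAtMost_iff)
  moreover have "t < s"
  proof (rule ccontr)
    assume "\<not> t < s"
    have "antimono_on {0..} phi1"
      using phi1_strict_antimono strict_antimono_iff_antimono by blast
    then have "phi1 t \<le> phi1 s"
      using \<open>\<not> t < s\<close> \<open>0 \<le> s\<close> \<open>0 \<le> t\<close> by (auto intro: monotone_onD)
    with \<open>phi1 s = a\<close> \<open>phi1 t = b\<close> \<open>a < b\<close> show False
      by simp
  qed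
  ultimately show "phi1_inv b < phi1_inv a"
    using phi1_inv_phi1 by metis
qed

lemma phi1_inv_nonneg:
  assumes "0 < a" "a \<le> 1"
  shows "0 \<le> phi1_inv a"
  using ex_phi1_eq[OF assms] phi1_inv_phi1 by auto

definition kappa :: "real \<Rightarrow> real" where
  "kappa s = integral {0..pi/2}
     (\<lambda>\<theta>. (sin \<theta>)\<^sup>2 / (sqrt (1 + s\<^sup>2) * (sqrt (1 + s\<^sup>2) + sqrt ((sin \<theta>)\<^sup>2 + s\<^sup>2))))"

lemma continuous_on_kappa_integrand:
  "continuous_on A
     (\<lambda>\<theta>. (sin \<theta>)\<^sup>2 / (sqrt (1 + s\<^sup>2) * (sqrt (1 + s\<^sup>2) + sqrt ((sin \<theta>)\<^sup>2 + s\<^sup>2))))"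
proof -
  have "0 < 1 + s\<^sup>2"
    by (simp add: add_pos_nonneg)
  then have "0 < sqrt (1 + s\<^sup>2) + sqrt ((sin \<theta>)\<^sup>2 + s\<^sup>2)" for \<theta>
    by (simp add: add_pos_nonneg)
  with \<open>0 < 1 + s\<^sup>2\<close> show ?thesis
    by (intro continuous_intros) (auto simp: less_imp_neq[symmetric])
qed

lemma kappa_nonneg: "0 \<le> kappa s"
  unfolding kappa_def
  by (intro integral_nonneg integrable_continuous_real continuous_on_kappa_integrand) simp

lemma kappa_strict_antimono: "strict_antimono_on {0..} kappa"
proof (rule monotone_onI)
  fix s t :: real
  assume "s \<in> {0..}" "s < t"
  then have "s\<^sup>2 < t\<^sup>2"
    by (simp add: power_strict_mono)
  show "kappa t < kappa s"
    unfolding kappa_def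
  proof (intro integral_quarter_period_less continuous_on_kappa_integrand)
    fix \<theta> :: real
    assume "0 < sin \<theta>"
    have "sqrt (1 + s\<^sup>2) * (sqrt (1 + s\<^sup>2) + sqrt ((sin \<theta>)\<^sup>2 + s\<^sup>2))
        < sqrt (1 + t\<^sup>2) * (sqrt (1 + t\<^sup>2) + sqrt ((sin \<theta>)\<^sup>2 + t\<^sup>2))"
      using \<open>s\<^sup>2 < t\<^sup>2\<close> by (intro mult_strict_mono add_strict_mono) (simp_all add: add_pos_nonneg)
    with \<open>0 < sin \<theta>\<close> show
      "(sin \<theta>)\<^sup>2 / (sqrt (1 + t\<^sup>2) * (sqrt (1 + t\<^sup>2) + sqrt ((sin \<theta>)\<^sup>2 + t\<^sup>2)))
        < (sin \<theta>)\<^sup>2 / (sqrt (1 + s\<^sup>2) * (sqrt (1 + s\<^sup>2) + sqrt ((sin \<theta>)\<^sup>2 + s\<^sup>2)))"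
      by (intro divide_strict_left_mono) (simp_all add: add_pos_nonneg)
  qed
qed

lemma phi2_integrand_identity:
  fixes S C r v s :: real
  assumes "r\<^sup>2 = 1 + s\<^sup>2" "v\<^sup>2 = S\<^sup>2 + s\<^sup>2" "S\<^sup>2 + C\<^sup>2 = 1" "0 < r" "0 < v"
  shows "((C * C - S * S) * (r + v) - S * C * (S * C / v)) / ((r + v) * (r + v))
    = r * (1 + S\<^sup>2 / (r * (r + v))) - (2 * S\<^sup>2 + s\<^sup>2) / v"
proof -
  define p where "p = r + v"
  have "p \<noteq> 0"
    using assms by (simp add: p_def)
  have "((C * C - S * S) * p - S * C * (S * C / v)) / (p * p)
      = r * (1 + S\<^sup>2 / (r * p)) - (2 * S\<^sup>2 + s\<^sup>2) / v"
    using assms \<open>p \<noteq> 0\<close> by (simp add: field_simps) (use assms p_def in algebra)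
  then show ?thesis
    by (simp add: p_def)
qed

lemma phi2_integrand_antiderivative:
  fixes s \<theta> :: real
  defines "r \<equiv> sqrt (1 + s\<^sup>2)" and "v \<equiv> \<lambda>\<theta>. sqrt ((sin \<theta>)\<^sup>2 + s\<^sup>2)"
  assumes "sin \<theta> \<noteq> 0"
  shows "((\<lambda>\<theta>. sin \<theta> * cos \<theta> / (r + v \<theta>)) has_real_derivative
      r * (1 + (sin \<theta>)\<^sup>2 / (r * (r + v \<theta>))) - (2 * (sin \<theta>)\<^sup>2 + s\<^sup>2) / v \<theta>) (at \<theta>)"
proof -
  have "0 < (sin \<theta>)\<^sup>2 + s\<^sup>2"
    using assms by (simp add: add_pos_nonneg)
  then have "0 < v \<theta>" "0 < r"
    by (simp_all add: v_def r_def add_pos_nonneg)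
  have "(v has_real_derivative sin \<theta> * cos \<theta> / v \<theta>) (at \<theta>)"
    unfolding v_def using \<open>0 < (sin \<theta>)\<^sup>2 + s\<^sup>2\<close>
    by (auto intro!: derivative_eq_intros simp: field_simps)
  then have "((\<lambda>\<theta>. sin \<theta> * cos \<theta> / (r + v \<theta>)) has_real_derivative
      ((cos \<theta> * cos \<theta> - sin \<theta> * sin \<theta>) * (r + v \<theta>) - sin \<theta> * cos \<theta> * (sin \<theta> * cos \<theta> / v \<theta>))
        / ((r + v \<theta>) * (r + v \<theta>))) (at \<theta>)"
    using \<open>0 < v \<theta>\<close> \<open>0 < r\<close> by (auto intro!: derivative_eq_intros)
  moreover have "r\<^sup>2 = 1 + s\<^sup>2" "(v \<theta>)\<^sup>2 = (sin \<theta>)\<^sup>2 + s\<^sup>2"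
    using \<open>0 < (sin \<theta>)\<^sup>2 + s\<^sup>2\<close> by (simp_all add: r_def v_def add_pos_nonneg)
  ultimately show ?thesis
    using phi2_integrand_identity[OF _ _ sin_cos_squared_add \<open>0 < r\<close> \<open>0 < v \<theta>\<close>] by simp
qed

lemma phi2_eq_kappa: "phi2 s = sqrt (1 + s\<^sup>2) * (pi / 2 + kappa s)"
proof -
  define r where "r = sqrt (1 + s\<^sup>2)"
  define v where "v \<theta> = sqrt ((sin \<theta>)\<^sup>2 + s\<^sup>2)" for \<theta>
  define g where "g \<theta> = (sin \<theta>)\<^sup>2 / (r * (r + v \<theta>))" for \<theta>
  define F where "F = (\<lambda>\<theta>. (2 * (sin \<theta>)\<^sup>2 + s\<^sup>2) / v \<theta>)"
  define P where "P = (\<lambda>\<theta>. sin \<theta> * cos \<theta> / (r + v \<theta>))"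
  have "((\<lambda>\<theta>. r * (1 + g \<theta>) - F \<theta>) has_integral P (pi/2) - P 0) {0..pi/2}"
  proof (rule fundamental_theorem_of_calculus_interior)
    have "0 < r + v \<theta>" for \<theta>
      by (simp add: r_def v_def add_pos_nonneg)
    then show "continuous_on {0..pi/2} P"
      unfolding P_def v_def by (intro continuous_intros) (auto simp: less_imp_neq[symmetric])
    fix \<theta> :: real
    assume "\<theta> \<in> {0<..<pi/2}"
    then have "sin \<theta> \<noteq> 0"
      using sin_gt_zero by fastforce
    then show "(P has_vector_derivative r * (1 + g \<theta>) - F \<theta>) (at \<theta>)"
      using phi2_integrand_antiderivative[of \<theta> s]
      by (simp add: P_def r_def v_def g_def F_def has_real_derivative_iff_has_vector_derivative)
  qed simp
  moreover have "P (pi/2) = 0" "P 0 = 0"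
    by (simp_all add: P_def)
  ultimately have correction: "((\<lambda>\<theta>. r * (1 + g \<theta>) - F \<theta>) has_integral 0) {0..pi/2}"
    by simp
  have "((\<lambda>_. 1) has_integral pi / 2) {0..pi/2}"
    using has_integral_const_real[of "1::real" 0 "pi/2"] by simp
  moreover have "(g has_integral kappa s) {0..pi/2}"
    unfolding kappa_def g_def r_def v_def
    by (intro integrable_integral integrable_continuous_real continuous_on_kappa_integrand)
  ultimately have "((\<lambda>\<theta>. r * (1 + g \<theta>)) has_integral r * (pi / 2 + kappa s)) {0..pi/2}"
    by (intro has_integral_mult_right has_integral_add)
  from has_integral_diff[OF this correction]
  have "(F has_integral r * (pi / 2 + kappa s)) {0..pi/2}"
    by simp
  then show ?thesis
    unfolding phi2_def F_def v_def r_def by (rule integral_unique)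
qed

lemma L_eq_kappa: "L \<alpha> \<delta> = 4 / \<delta> * (1 - (pi / 2 + kappa (phi1_inv \<alpha>))\<^sup>2 / 4)"
proof -
  have phi2_ratio: "(phi2 s)\<^sup>2 / (4 * (1 + s\<^sup>2)) = (pi / 2 + kappa s)\<^sup>2 / 4" for s
  proof -
    have "0 < 1 + s\<^sup>2"
      by (simp add: add_pos_nonneg)
    moreover have "(phi2 s)\<^sup>2 = (1 + s\<^sup>2) * (pi / 2 + kappa s)\<^sup>2"
      by (simp add: phi2_eq_kappa power_mult_distrib add_pos_nonneg)
    ultimately show ?thesis
      by (simp only: mult.commute[of 4] mult_divide_mult_cancel_left less_irrefl)
  qed
  then show ?thesis
    by (simp only: L_def phi2_ratio)
qed

theorem mainTheorem14:
  fixes \<delta> :: real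
  assumes "\<delta> > 0"
  shows "strict_antimono_on {0<..<1} (\<lambda>\<alpha>. L \<alpha> \<delta>)"
proof (rule monotone_onI)
  fix a b :: real
  assume "a \<in> {0<..<1}" "b \<in> {0<..<1}" "a < b"
  then have "phi1_inv b < phi1_inv a" "0 \<le> phi1_inv b"
    using monotone_onD[OF phi1_inv_strict_antimono, of a b] phi1_inv_nonneg[of b] by auto
  then have "kappa (phi1_inv a) < kappa (phi1_inv b)"
    using monotone_onD[OF kappa_strict_antimono, of "phi1_inv b" "phi1_inv a"] by auto
  then have "(pi / 2 + kappa (phi1_inv a))\<^sup>2 < (pi / 2 + kappa (phi1_inv b))\<^sup>2"
    using kappa_nonneg[of "phi1_inv a"] pi_gt_zero by (intro power_strict_mono) auto
  then show "L b \<delta> < L a \<delta>"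
    using assms by (simp add: L_eq_kappa divide_strict_right_mono)
qed

end
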